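(* Let $G$ be a finite group. (a) Every element of $G$ of prime order is an isolated vertex of the undeleted difference graph of $G$. (b) If every non-identity element of $G$ has prime order, then $\mathcal{D}(G)$ is null (has no edges).
   Context: For a finite group $G$ with identity $e$: the intersection power graph $\mathcal{G}_I(G)$ has vertex set $G$, two distinct non-identity vertices $x,y$ being adjacent iff $\langle x\rangle\cap\langle y\rangle\neq\{e\}$, and $e$ being adjacent to every other vertex. The power graph $\mathcal{P}(G)$ has vertex set $G$, two distinct vertices being adjacent iff one is a power of the other. The undeleted difference graph of $G$ has vertex set $G$ and edge set $E(\mathcal{G}_I(G))\setminus E(\mathcal{P}(G))$; the difference graph $\mathcal{D}(G)$ is obtained from it by deleting all isolated vertices. *)

theory Defs
  imports "HOL-Algebra.Algebra" "HOL-Computational_Algebra.Primes"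
begin

definition ipg_adj :: "('a, 'b) monoid_scheme \<Rightarrow> 'a \<Rightarrow> 'a \<Rightarrow> bool" where
  "ipg_adj G x y \<longleftrightarrow> x \<in> carrier G \<and> y \<in> carrier G \<and> x \<noteq> y \<and>
     (x = \<one>\<^bsub>G\<^esub> \<or> y = \<one>\<^bsub>G\<^esub> \<or>
      generate G {x} \<inter> generate G {y} \<noteq> {\<one>\<^bsub>G\<^esub>})"

definition power_adj :: "('a, 'b) monoid_scheme \<Rightarrow> 'a \<Rightarrow> 'a \<Rightarrow> bool" where
  "power_adj G x y \<longleftrightarrow> x \<in> carrier G \<and> y \<in> carrier G \<and> x \<noteq> y \<and>
     ((\<exists>n::int. y = x [^]\<^bsub>G\<^esub> n) \<or> (\<exists>n::int. x = y [^]\<^bsub>G\<^esub> n))"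

definition diff_adj :: "('a, 'b) monoid_scheme \<Rightarrow> 'a \<Rightarrow> 'a \<Rightarrow> bool" where
  "diff_adj G x y \<longleftrightarrow> ipg_adj G x y \<and> \<not> power_adj G x y"

definition isolated_in_undeleted_diff :: "('a, 'b) monoid_scheme \<Rightarrow> 'a \<Rightarrow> bool" where
  "isolated_in_undeleted_diff G x \<longleftrightarrow> x \<in> carrier G \<and> (\<forall>y \<in> carrier G. \<not> diff_adj G x y)"

definition diff_graph_vertices :: "('a, 'b) monoid_scheme \<Rightarrow> 'a set" where
  "diff_graph_vertices G = {x \<in> carrier G. \<not> isolated_in_undeleted_diff G x}"

definition diff_graph_edges :: "('a, 'b) monoid_scheme \<Rightarrow> 'a set set" where
  "diff_graph_edges G = {{x, y} | x y. x \<in> diff_graph_vertices G \<and> y \<in> diff_graph_vertices G \<and> diff_adj G x y}"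

end

theory Submission
  imports Defs
begin

text \<open>
  If \<open>x\<close> has prime order \<open>p\<close>, every non-identity element \<open>z\<close> of \<open>\<langle>x\<rangle>\<close> has order dividing
  \<open>p\<close>, hence order \<open>p\<close>, so \<open>\<langle>z\<rangle> = \<langle>x\<rangle>\<close>. Thus if \<open>\<langle>x\<rangle>\<close> meets \<open>\<langle>y\<rangle>\<close> nontrivially, then
  \<open>x \<in> \<langle>z\<rangle> \<subseteq> \<langle>y\<rangle>\<close> and \<open>x\<close> is a power of \<open>y\<close>: every intersection edge at \<open>x\<close> is a
  power edge. The identity is a power of everything, so when all non-identity elements
  have prime order no vertex carries a difference edge.
\<close>

lemma (in group) ord_dvd_ord_of_mem_generate:
  assumes x: "x \<in> carrier G" and z: "z \<in> generate G {x}"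
  shows "ord z dvd ord x"
proof -
  obtain k :: int where k: "z = x [^] k"
    using z generate_pow[OF x] by blast
  have "z [^] ord x = (x [^] k) [^] int (ord x)"
    by (simp add: k int_pow_int)
  also have "\<dots> = x [^] (k * int (ord x))"
    using x by (simp add: int_pow_pow)
  also have "\<dots> = \<one>"
    using x by (simp add: int_pow_eq_id)
  finally show ?thesis
    using pow_eq_id x k by simp
qed

lemma (in group) generate_eq_of_prime_ord:
  assumes x: "x \<in> carrier G" and p: "Factorial_Ring.prime (ord x)"
    and z: "z \<in> generate G {x}" "z \<noteq> \<one>"
  shows "generate G {z} = generate G {x}"
proof -
  have zc: "z \<in> carrier G"
    using z generate_pow[OF x] x by auto
  have "ord z = ord x"
    using ord_dvd_ord_of_mem_generate[OF x z(1)] ord_eq_1[OF zc] z(2) p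
    by (auto simp: prime_nat_iff)
  then have "card (generate G {z}) = card (generate G {x})"
    by (simp flip: generate_pow_card[OF zc] generate_pow_card[OF x])
  moreover have "finite (generate G {x})"
    using p by (metis card.infinite generate_pow_card[OF x] not_prime_0)
  moreover have "generate G {z} \<subseteq> generate G {x}"
    using z x by (intro generate_subgroup_incl generate_is_subgroup) auto
  ultimately show ?thesis
    by (simp add: card_subset_eq)
qed

lemma (in group) mem_generate_of_prime_ord:
  assumes x: "x \<in> carrier G" and y: "y \<in> carrier G" and p: "Factorial_Ring.prime (ord x)"
    and meet: "generate G {x} \<inter> generate G {y} \<noteq> {\<one>}"
  shows "x \<in> generate G {y}"
proof -
  have "\<one> \<in> generate G {x} \<inter> generate G {y}"
    by (simp add: generate.one)
  with meet obtain z where zx: "z \<in> generate G {x}" and zy: "z \<in> generate G {y}" and "z \<noteq> \<one>"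
    by blast
  then have "x \<in> generate G {z}"
    using generate_eq_of_prime_ord[OF x p] generate.incl[of x "{x}" G] by auto
  moreover have "generate G {z} \<subseteq> generate G {y}"
    using zy y by (intro generate_subgroup_incl generate_is_subgroup) auto
  ultimately show ?thesis
    by blast
qed

lemma power_adj_of_mem_generate:
  assumes "group G" "x \<in> carrier G" "y \<in> carrier G" "x \<noteq> y" "x \<in> generate G {y}"
  shows "power_adj G x y"
  using assms group.generate_pow[OF assms(1,3)] unfolding power_adj_def by blast

lemma diff_adj_sym: "diff_adj G x y \<longleftrightarrow> diff_adj G y x"
  unfolding diff_adj_def ipg_adj_def power_adj_def by blast

lemma not_diff_adj_one:
  assumes "group G"
  shows "\<not> diff_adj G \<one>\<^bsub>G\<^esub> y"
  using power_adj_of_mem_generate[OF assms] generate.one[of G "{y}"]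
  by (auto simp: diff_adj_def ipg_adj_def)

lemma not_diff_adj_of_prime_ord:
  assumes G: "group G" and x: "x \<in> carrier G" and p: "Factorial_Ring.prime (group.ord G x)"
  shows "\<not> diff_adj G x y"
proof
  assume "diff_adj G x y"
  then have y: "y \<in> carrier G" and "x \<noteq> y" and no_power: "\<not> power_adj G x y"
    and ipg: "ipg_adj G x y"
    by (auto simp: diff_adj_def ipg_adj_def)
  have "x \<noteq> \<one>\<^bsub>G\<^esub>"
    using p group.ord_eq_1[OF G x] by auto
  moreover have "y \<noteq> \<one>\<^bsub>G\<^esub>"
    using not_diff_adj_one[OF G] \<open>diff_adj G x y\<close> diff_adj_sym by metis
  ultimately have "generate G {x} \<inter> generate G {y} \<noteq> {\<one>\<^bsub>G\<^esub>}"
    using ipg by (simp add: ipg_adj_def)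
  then have "x \<in> generate G {y}"
    by (rule group.mem_generate_of_prime_ord[OF G x y p])
  then show False
    using power_adj_of_mem_generate[OF G x y \<open>x \<noteq> y\<close>] no_power by blast
qed

lemma diff_graph_edges_empty_if_all_isolated:
  assumes "\<forall>x \<in> carrier G. isolated_in_undeleted_diff G x"
  shows "diff_graph_edges G = {}"
  using assms by (simp add: diff_graph_edges_def diff_graph_vertices_def)

theorem proposition2p3:
  fixes G (structure)
  assumes "group G" and "finite (carrier G)"
  shows "(\<forall>x \<in> carrier G. Factorial_Ring.prime (group.ord G x) \<longrightarrow> isolated_in_undeleted_diff G x)
     \<and> ((\<forall>x \<in> carrier G. x \<noteq> \<one> \<longrightarrow> Factorial_Ring.prime (group.ord G x)) \<longrightarrow> diff_graph_edges G = {})"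
proof (intro conjI impI)
  have prime_isolated: "isolated_in_undeleted_diff G x"
    if "x \<in> carrier G" "Factorial_Ring.prime (group.ord G x)" for x
    using that not_diff_adj_of_prime_ord[OF assms(1)] by (simp add: isolated_in_undeleted_diff_def)
  then show "\<forall>x \<in> carrier G. Factorial_Ring.prime (group.ord G x) \<longrightarrow> isolated_in_undeleted_diff G x"
    by blast
  assume "\<forall>x \<in> carrier G. x \<noteq> \<one> \<longrightarrow> Factorial_Ring.prime (group.ord G x)"
  then have "\<forall>x \<in> carrier G. isolated_in_undeleted_diff G x"
    using prime_isolated not_diff_adj_one[OF assms(1)] monoid.one_closed[OF group.is_monoid[OF assms(1)]]
    by (auto simp: isolated_in_undeleted_diff_def)
  then show "diff_graph_edges G = {}"
    by (rule diff_graph_edges_empty_if_all_isolated)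
qed

end
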